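(* Let $K$ be a skew field that is finite-dimensional over its center, and take $\sigma=\mathrm{id}$, $\delta=0$, so $K[T;\sigma,\delta]=K[T]$ with $T$ central. Then a skew rational function in $K(T)$ is defined at $a\in K$ if and only if the denominator $P(T)$ of its minimal representation satisfies $P(c)\neq0$ for every $c\in\{bab^{-1}:b\in K^*\}$.
   Context: Here $K^*=K\setminus\{0\}$ acts on $K$ by conjugation ${}^{b}a=bab^{-1}$, and $\Delta(a)=\{bab^{-1}:b\in K^*\}$. For $P\in K[T]$ and $a\in K$, $P(a)$ is the unique element of $K$ with $P(T)-P(a)\in K[T](T-a)$ (i.e. $P(a)=\sum p_ia^i$ for $P=\sum p_iT^i$). For a set $Z$ with a $K^*$-action, the skew product of functions $Z\to K$ is $(f\diamond g)(z)=f({}^{g(z)}z)g(z)$ if $g(z)\neq0$, $0$ otherwise; $f$ is skew invertible if some $g$ satisfies $f\diamond g=g\diamond f=1$. $K(T)$ is the division ring of left fractions of $K[T]$; each $f$ has a unique minimal representation $P(T)^{-1}Q(T)$ with $P$ monic of least degree; $f$ is defined at $a$ if the function $\Delta(a)\to K$, $c\mapsto P(c)$, is skew invertible. *)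

theory Defs
  imports Main
begin

text \<open>Skew field K = type 'a of class division_ring. Polynomials in K[T] (T central)
are coefficient functions nat => 'a with finite support.\<close>

definition center :: "'a::division_ring set" where
  "center = {z. \<forall>x. z * x = x * z}"

definition fin_dim_over_center :: "'a::division_ring itself \<Rightarrow> bool" where
  "fin_dim_over_center _ \<longleftrightarrow>
     (\<exists>B::'a set. finite B \<and>
        (\<forall>x::'a. \<exists>c. (\<forall>b\<in>B. c b \<in> center) \<and> x = (\<Sum>b\<in>B. c b * b)))"

definition spoly :: "(nat \<Rightarrow> 'a::zero) \<Rightarrow> bool" where
  "spoly p \<longleftrightarrow> (\<exists>n. \<forall>i\<ge>n. p i = 0)"

definition pzero :: "nat \<Rightarrow> 'a::zero" where
  "pzero = (\<lambda>_. 0)"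

text \<open>Product in K[T] with T central: coefficients convolve.\<close>
definition pmul :: "(nat \<Rightarrow> 'a::ring) \<Rightarrow> (nat \<Rightarrow> 'a) \<Rightarrow> nat \<Rightarrow> 'a" where
  "pmul p q = (\<lambda>n. \<Sum>i\<le>n. p i * q (n - i))"

definition pdeg :: "(nat \<Rightarrow> 'a::zero) \<Rightarrow> nat" where
  "pdeg p = (if p = pzero then 0 else (GREATEST i. p i \<noteq> 0))"

definition monic :: "(nat \<Rightarrow> 'a::{zero,one}) \<Rightarrow> bool" where
  "monic p \<longleftrightarrow> p \<noteq> pzero \<and> p (pdeg p) = 1"

definition peval :: "(nat \<Rightarrow> 'a::ring_1) \<Rightarrow> 'a \<Rightarrow> 'a" where
  "peval p a = (\<Sum>i\<le>pdeg p. p i * a ^ i)"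

text \<open>(P,Q) with P nonzero represents the left fraction P^{-1}Q in K(T).
Two left fractions are equal iff they have a common left expansion (Ore).\<close>
definition same_frac ::
  "(nat \<Rightarrow> 'a::division_ring) \<Rightarrow> (nat \<Rightarrow> 'a) \<Rightarrow> (nat \<Rightarrow> 'a) \<Rightarrow> (nat \<Rightarrow> 'a) \<Rightarrow> bool" where
  "same_frac P Q P' Q' \<longleftrightarrow>
     (\<exists>u u'. spoly u \<and> spoly u' \<and> u \<noteq> pzero \<and> u' \<noteq> pzero \<and>
        pmul u P = pmul u' P' \<and> pmul u Q = pmul u' Q')"

definition is_rep :: "(nat \<Rightarrow> 'a::division_ring) \<Rightarrow> (nat \<Rightarrow> 'a) \<Rightarrow> bool" where
  "is_rep P Q \<longleftrightarrow> spoly P \<and> spoly Q \<and> P \<noteq> pzero"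

definition minimal_rep :: "(nat \<Rightarrow> 'a::division_ring) \<Rightarrow> (nat \<Rightarrow> 'a) \<Rightarrow> bool" where
  "minimal_rep P Q \<longleftrightarrow> is_rep P Q \<and> monic P \<and>
     (\<forall>P' Q'. is_rep P' Q' \<and> monic P' \<and> same_frac P Q P' Q' \<longrightarrow> pdeg P \<le> pdeg P')"

definition conj_class :: "'a::division_ring \<Rightarrow> 'a set" ("\<Delta>") where
  "\<Delta> a = {b * a * inverse b | b. b \<noteq> 0}"

text \<open>Skew product of functions Z -> K, with K^* acting on Z by conjugation.\<close>
definition skew_prod :: "('a::division_ring \<Rightarrow> 'a) \<Rightarrow> ('a \<Rightarrow> 'a) \<Rightarrow> 'a \<Rightarrow> 'a" where
  "skew_prod f g z = (if g z \<noteq> 0 then f (g z * z * inverse (g z)) * g z else 0)"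

definition skew_invertible :: "'a::division_ring set \<Rightarrow> ('a \<Rightarrow> 'a) \<Rightarrow> bool" where
  "skew_invertible Z f \<longleftrightarrow>
     (\<exists>g. \<forall>z\<in>Z. skew_prod f g z = 1 \<and> skew_prod g f z = 1)"

text \<open>f = P^{-1}Q (given by its minimal representation) is defined at a.\<close>
definition defined_at :: "(nat \<Rightarrow> 'a::division_ring) \<Rightarrow> 'a \<Rightarrow> bool" where
  "defined_at P a \<longleftrightarrow> skew_invertible (\<Delta> a) (\<lambda>c. peval P c)"

end

theory Submission
  imports Defs "HOL.Vector_Spaces"
begin

text \<open>Write a conjugate of \<open>a\<close> as \<open>c = b a b\<inverse>\<close>. Then \<open>P(c) = L(b) b\<inverse>\<close> with
  \<open>L(b) = \<Sum> P\<^sub>i b a\<^sup>i\<close>, a map that is additive and linear over the centre. If \<open>P\<close> has no zero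
  on \<open>\<Delta>(a)\<close>, then \<open>L\<close> is injective, hence bijective because \<open>K\<close> is finite-dimensional
  over its centre. A skew inverse of \<open>P\<close> on \<open>\<Delta>(a)\<close> exists as soon as
  \<open>z \<mapsto> P(z) z P(z)\<inverse>\<close> permutes \<open>\<Delta>(a)\<close>, and in the coordinates above this map is
  \<open>b a b\<inverse> \<mapsto> L(b) a L(b)\<inverse>\<close>, a bijection since \<open>L\<close> is.\<close>

lemma center_0: "0 \<in> center" and center_1: "1 \<in> center"
  by (auto simp: center_def)

lemma center_add: "x \<in> center \<Longrightarrow> y \<in> center \<Longrightarrow> x + y \<in> center"
  unfolding center_def mem_Collect_eq by (metis distrib_left distrib_right)

lemma center_minus: "x \<in> center \<Longrightarrow> - x \<in> center"
  unfolding center_def mem_Collect_eq by (metis minus_mult_left minus_mult_right)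

lemma center_diff: "x \<in> center \<Longrightarrow> y \<in> center \<Longrightarrow> x - y \<in> center"
  by (metis center_add center_minus diff_conv_add_uminus)

lemma center_mult: "x \<in> center \<Longrightarrow> y \<in> center \<Longrightarrow> x * y \<in> center"
  unfolding center_def mem_Collect_eq by (metis mult.assoc)

lemma center_inverse:
  fixes z :: "'a::division_ring"
  assumes "z \<in> center"
  shows "inverse z \<in> center"
proof (cases "z = 0")
  case False
  have "inverse z * x = x * inverse z" for x
  proof -
    have "inverse z * x = inverse z * (x * z) * inverse z" using False by (simp add: mult.assoc)
    also have "\<dots> = inverse z * (z * x) * inverse z" using assms by (simp add: center_def)
    also have "\<dots> = x * inverse z" using False by (simp add: mult.assoc[symmetric])
    finally show ?thesis .
  qed
  then show ?thesis by (simp add: center_def)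
qed (simp add: center_def)

typedef (overloaded) ('a::division_ring) cen = "center :: 'a set"
  morphisms rep_cen Abs_cen
  using center_0 by blast

setup_lifting type_definition_cen

instantiation cen :: (division_ring) field
begin
lift_definition zero_cen :: "'a cen" is 0 by (rule center_0)
lift_definition one_cen :: "'a cen" is 1 by (rule center_1)
lift_definition plus_cen :: "'a cen \<Rightarrow> 'a cen \<Rightarrow> 'a cen" is "(+)" by (rule center_add)
lift_definition minus_cen :: "'a cen \<Rightarrow> 'a cen \<Rightarrow> 'a cen" is "(-)" by (rule center_diff)
lift_definition uminus_cen :: "'a cen \<Rightarrow> 'a cen" is uminus by (rule center_minus)
lift_definition times_cen :: "'a cen \<Rightarrow> 'a cen \<Rightarrow> 'a cen" is "(*)" by (rule center_mult)
lift_definition inverse_cen :: "'a cen \<Rightarrow> 'a cen" is inverse by (rule center_inverse)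
lift_definition divide_cen :: "'a cen \<Rightarrow> 'a cen \<Rightarrow> 'a cen" is "\<lambda>x y. x * inverse y"
  by (rule center_mult, assumption, rule center_inverse)
instance
proof
  fix a b c :: "'a cen"
  show "a * b * c = a * (b * c)" by transfer (simp add: mult.assoc)
  show "a * b = b * a" by transfer (unfold center_def, blast)
  show "1 * a = a" by transfer simp
  show "a + b + c = a + (b + c)" by transfer (simp add: add.assoc)
  show "a + b = b + a" by transfer (simp add: add.commute)
  show "0 + a = a" by transfer simp
  show "- a + a = 0" by transfer simp
  show "a - b = a + - b" by transfer simp
  show "(a + b) * c = a * c + b * c" by transfer (simp add: distrib_right)
  show "(0::'a cen) \<noteq> 1" by transfer simp
qed (transfer, simp)+
end

lemma vector_space_center_scale: "vector_space (\<lambda>(c::'a::division_ring cen) x. rep_cen c * x)"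
  by unfold_locales
    (auto simp: plus_cen.rep_eq times_cen.rep_eq one_cen.rep_eq distrib_left distrib_right mult.assoc)

lemma finite_dimensional_center_scale:
  assumes "fin_dim_over_center TYPE('a::division_ring)"
  obtains B :: "'a::division_ring set"
  where "finite_dimensional_vector_space (\<lambda>(c::'a cen) x. rep_cen c * x) B"
proof -
  define s where "s = (\<lambda>(c::'a cen) x. rep_cen c * x)"
  interpret vs: vector_space s unfolding s_def by (rule vector_space_center_scale)
  obtain B :: "'a set" where "finite B"
    and B: "\<And>x. \<exists>c. (\<forall>b\<in>B. c b \<in> center) \<and> x = (\<Sum>b\<in>B. c b * b)"
    using assms unfolding fin_dim_over_center_def by blast
  have spans: "UNIV \<subseteq> vs.span B"
  proof
    fix x :: 'a
    obtain c where c: "\<forall>b\<in>B. c b \<in> center" "x = (\<Sum>b\<in>B. c b * b)" using B by blast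
    have "x = (\<Sum>b\<in>B. s (Abs_cen (c b)) b)"
      using c by (auto simp: s_def Abs_cen_inverse intro: sum.cong)
    also have "\<dots> \<in> vs.span B"
      by (intro vs.span_sum vs.span_scale vs.span_base)
    finally show "x \<in> vs.span B" .
  qed
  obtain B' where B': "vs.independent B'" "UNIV \<subseteq> vs.span B'"
    by (meson vs.basis_exists)
  have "finite B'" using vs.independent_span_bound[OF \<open>finite B\<close> B'(1)] spans by auto
  then have "finite_dimensional_vector_space s B'"
    by unfold_locales (use B' in auto)
  then show thesis unfolding s_def by (rule that)
qed

lemma surj_if_inj_center_linear:
  fixes L :: "'a::division_ring \<Rightarrow> 'a"
  assumes "fin_dim_over_center TYPE('a)"
    and add: "\<And>x y. L (x + y) = L x + L y"
    and scale: "\<And>c x. c \<in> center \<Longrightarrow> L (c * x) = c * L x"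
    and "inj L"
  shows "surj L"
proof -
  define s where "s = (\<lambda>(c::'a cen) x. rep_cen c * x)"
  obtain B where "finite_dimensional_vector_space s B"
    using finite_dimensional_center_scale[OF assms(1)] unfolding s_def by blast
  then interpret fd: finite_dimensional_vector_space s B .
  have "Vector_Spaces.linear s s L"
    unfolding module_hom_iff_linear[symmetric] module_hom_def module_hom_axioms_def
    using fd.vector_space_axioms
    by (simp add: module_iff_vector_space add s_def scale[OF rep_cen])
  then show ?thesis by (rule fd.linear_inj_imp_surj[OF _ \<open>inj L\<close>])
qed

lemma skew_invertible_nonzero:
  assumes "skew_invertible Z f" and "z \<in> Z"
  shows "f z \<noteq> 0"
  using assms by (auto simp: skew_invertible_def skew_prod_def)

lemma skew_invertible_if_bij_conj:
  fixes f :: "'a::division_ring \<Rightarrow> 'a"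
  assumes nonzero: "\<And>z. z \<in> Z \<Longrightarrow> f z \<noteq> 0"
    and bij: "bij_betw (\<lambda>z. f z * z * inverse (f z)) Z Z"
  shows "skew_invertible Z f"
proof -
  define \<Phi> where "\<Phi> = (\<lambda>z. f z * z * inverse (f z))"
  define g where "g = (\<lambda>z. inverse (f (inv_into Z \<Phi> z)))"
  have "skew_prod f g z = 1 \<and> skew_prod g f z = 1" if z: "z \<in> Z" for z
  proof
    define w where "w = inv_into Z \<Phi> z"
    have "z \<in> \<Phi> ` Z" using bij z by (simp add: bij_betw_def \<Phi>_def)
    then have w: "w \<in> Z" "\<Phi> w = z"
      unfolding w_def by (auto intro: inv_into_into f_inv_into_f)
    have "f w \<noteq> 0" using nonzero w(1) .
    have gz: "g z = inverse (f w)" unfolding g_def w_def ..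
    have "g z * z * inverse (g z) = w"
      using \<open>f w \<noteq> 0\<close> gz w(2)[symmetric] unfolding \<Phi>_def
      by (simp add: mult.assoc flip: mult.assoc[of "inverse (f w)" "f w"])
    then show "skew_prod f g z = 1"
      using \<open>f w \<noteq> 0\<close> gz by (simp add: skew_prod_def)
    have "inv_into Z \<Phi> (\<Phi> z) = z"
      using bij z unfolding \<Phi>_def by (rule bij_betw_inv_into_left)
    then show "skew_prod g f z = 1"
      using nonzero[OF z] by (simp add: skew_prod_def g_def \<Phi>_def)
  qed
  then show ?thesis unfolding skew_invertible_def by blast
qed

lemma power_conj:
  fixes a b :: "'a::division_ring"
  assumes "b \<noteq> 0"
  shows "(b * a * inverse b) ^ i = b * a ^ i * inverse b"
proof (induction i)
  case (Suc i)
  have "(b * a * inverse b) ^ Suc i = b * a * (inverse b * b) * a ^ i * inverse b"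
    using Suc by (simp add: mult.assoc)
  then show ?case using assms by (simp add: mult.assoc)
qed (use assms in simp)

lemma conj_eq_conj_commute:
  fixes a x y :: "'a::division_ring"
  assumes "x * a * inverse x = y * a * inverse y" and "x \<noteq> 0" and "y \<noteq> 0"
  shows "inverse y * x * a = a * (inverse y * x)"
proof -
  have "x * a = y * a * inverse y * x"
    using arg_cong[OF assms(1), of "\<lambda>t. t * x"] assms(2) by (simp add: mult.assoc)
  then have "inverse y * (x * a) = inverse y * (y * a * inverse y * x)" by simp
  then show ?thesis using assms(3) by (simp add: mult.assoc[symmetric])
qed

lemma conj_mult_commute:
  fixes a b d :: "'a::division_ring"
  assumes "d * a = a * d" and "b \<noteq> 0" and "d \<noteq> 0"
  shows "(b * d) * a * inverse (b * d) = b * a * inverse b"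
proof -
  have "(b * d) * a * inverse (b * d) = b * (d * a * inverse d) * inverse b"
    using assms(2,3) by (simp add: nonzero_inverse_mult_distrib mult.assoc)
  also have "d * a * inverse d = a" using assms(1,3) by (simp add: mult.assoc)
  finally show ?thesis .
qed

definition conj_eval :: "(nat \<Rightarrow> 'a::division_ring) \<Rightarrow> 'a \<Rightarrow> 'a \<Rightarrow> 'a" where
  "conj_eval P a b = (\<Sum>i\<le>pdeg P. P i * b * a ^ i)"

lemma peval_conj:
  assumes "b \<noteq> 0"
  shows "peval P (b * a * inverse b) = conj_eval P a b * inverse b"
  unfolding peval_def conj_eval_def sum_distrib_right
  using power_conj[OF assms] by (simp add: mult.assoc)

lemma conj_eval_add: "conj_eval P a (x + y) = conj_eval P a x + conj_eval P a y"
  unfolding conj_eval_def by (simp add: distrib_left distrib_right sum.distrib)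

lemma conj_eval_diff: "conj_eval P a (x - y) = conj_eval P a x - conj_eval P a y"
  using conj_eval_add[of P a "x - y" y] by (simp add: algebra_simps)

lemma conj_eval_center_mult:
  assumes "c \<in> center"
  shows "conj_eval P a (c * x) = c * conj_eval P a x"
proof -
  have "P i * c = c * P i" for i using assms by (simp add: center_def)
  then show ?thesis unfolding conj_eval_def sum_distrib_left by (metis mult.assoc)
qed

lemma conj_eval_mult_commute:
  assumes "d * a = a * d"
  shows "conj_eval P a (b * d) = conj_eval P a b * d"
proof -
  have "d * a ^ i = a ^ i * d" for i
    using power_commuting_commutes[of a d i] assms by simp
  then show ?thesis unfolding conj_eval_def sum_distrib_right by (metis mult.assoc)
qed

lemma conj_eval_eq_0:
  assumes "\<forall>c\<in>\<Delta> a. peval P c \<noteq> 0" and "conj_eval P a b = 0"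
  shows "b = 0"
proof (rule ccontr)
  assume "b \<noteq> 0"
  then have "b * a * inverse b \<in> \<Delta> a" by (auto simp: conj_class_def)
  then show False using assms peval_conj[OF \<open>b \<noteq> 0\<close>] by auto
qed

lemma bij_conj_eval:
  fixes P :: "nat \<Rightarrow> 'a::division_ring"
  assumes "fin_dim_over_center TYPE('a)" and "\<forall>c\<in>\<Delta> a. peval P c \<noteq> 0"
  shows "bij (conj_eval P a)"
proof -
  have "inj (conj_eval P a)"
  proof (rule injI)
    fix x y assume "conj_eval P a x = conj_eval P a y"
    then have "conj_eval P a (x - y) = 0" by (simp add: conj_eval_diff)
    then have "x - y = 0" by (rule conj_eval_eq_0[OF assms(2)])
    then show "x = y" by simp
  qed
  moreover have "surj (conj_eval P a)"
    using assms(1) conj_eval_add conj_eval_center_mult \<open>inj (conj_eval P a)\<close>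
    by (rule surj_if_inj_center_linear)
  ultimately show ?thesis by (rule bijI)
qed

lemma bij_peval_conj:
  fixes P :: "nat \<Rightarrow> 'a::division_ring"
  assumes "fin_dim_over_center TYPE('a)" and nonzero: "\<forall>c\<in>\<Delta> a. peval P c \<noteq> 0"
  shows "bij_betw (\<lambda>z. peval P z * z * inverse (peval P z)) (\<Delta> a) (\<Delta> a)"
proof -
  define L where "L = conj_eval P a"
  define \<Phi> where "\<Phi> = (\<lambda>z. peval P z * z * inverse (peval P z))"
  have "bij L" unfolding L_def using assms by (rule bij_conj_eval)
  have L0: "L b \<noteq> 0" if "b \<noteq> 0" for b
    using conj_eval_eq_0[OF nonzero] that by (auto simp: L_def)
  have \<Phi>_conj: "\<Phi> (b * a * inverse b) = L b * a * inverse (L b)" if "b \<noteq> 0" for b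
  proof -
    have "\<Phi> (b * a * inverse b) = L b * inverse b * (b * a * inverse b) * (b * inverse (L b))"
      unfolding \<Phi>_def peval_conj[OF that] L_def[symmetric]
      using that L0[OF that] by (simp add: nonzero_inverse_mult_distrib)
    also have "\<dots> = L b * (inverse b * b) * a * (inverse b * b) * inverse (L b)"
      by (simp add: mult.assoc)
    finally show ?thesis using that by simp
  qed
  have "inj_on \<Phi> (\<Delta> a)"
  proof (rule inj_onI)
    fix z1 z2 assume "z1 \<in> \<Delta> a" "z2 \<in> \<Delta> a" and "\<Phi> z1 = \<Phi> z2"
    then obtain b1 b2 where b: "b1 \<noteq> 0" "b2 \<noteq> 0"
      and z: "z1 = b1 * a * inverse b1" "z2 = b2 * a * inverse b2"
      by (auto simp: conj_class_def)
    define d where "d = inverse (L b2) * L b1"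
    have "d * a = a * d"
      unfolding d_def using \<open>\<Phi> z1 = \<Phi> z2\<close> b L0
      by (intro conj_eq_conj_commute) (auto simp: z \<Phi>_conj)
    have "L (b2 * d) = L b1"
      using conj_eval_mult_commute[OF \<open>d * a = a * d\<close>] L0[OF b(2)]
      by (simp add: L_def d_def mult.assoc[symmetric])
    then have "b1 = b2 * d" using \<open>bij L\<close> by (auto dest: bij_is_inj injD)
    moreover have "d \<noteq> 0" using L0 b by (simp add: d_def)
    ultimately show "z1 = z2"
      using conj_mult_commute[OF \<open>d * a = a * d\<close> b(2)] by (simp add: z)
  qed
  moreover have "\<Phi> ` \<Delta> a = \<Delta> a"
  proof
    show "\<Phi> ` \<Delta> a \<subseteq> \<Delta> a"
      using \<Phi>_conj L0 by (auto simp: conj_class_def)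
    show "\<Delta> a \<subseteq> \<Phi> ` \<Delta> a"
    proof
      fix z assume "z \<in> \<Delta> a"
      then obtain c where c: "c \<noteq> 0" "z = c * a * inverse c" by (auto simp: conj_class_def)
      obtain b where "L b = c" using \<open>bij L\<close> by (metis bij_pointE)
      then have "b \<noteq> 0" using c conj_eval_diff[of P a 0 0] by (auto simp: L_def)
      then show "z \<in> \<Phi> ` \<Delta> a"
        using \<Phi>_conj \<open>L b = c\<close> c by (auto simp: conj_class_def intro!: image_eqI)
    qed
  qed
  ultimately show ?thesis unfolding \<Phi>_def[symmetric] by (rule bij_betw_imageI)
qed

theorem corollary3p6:
  fixes P Q :: "nat \<Rightarrow> 'a::division_ring" and a :: 'a
  assumes "fin_dim_over_center TYPE('a)"
    and "minimal_rep P Q"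
  shows "defined_at P a \<longleftrightarrow> (\<forall>c\<in>\<Delta> a. peval P c \<noteq> 0)"
proof
  show "defined_at P a \<Longrightarrow> \<forall>c\<in>\<Delta> a. peval P c \<noteq> 0"
    unfolding defined_at_def using skew_invertible_nonzero by blast
  show "\<forall>c\<in>\<Delta> a. peval P c \<noteq> 0 \<Longrightarrow> defined_at P a"
    unfolding defined_at_def
    by (rule skew_invertible_if_bij_conj) (use assms(1) bij_peval_conj in auto)
qed

end
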